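(* Let $G$ be a circulant graph with an odd number of vertices and let $n \ge 1$. Then $K_{n,n} \otimes G$ is a circulant graph.
   Context: Graphs have no multiple edges but may have loops. The tensor product $G \otimes H$ of graphs $G$ and $H$ has vertex set $V(G)\times V(H)$, with $(g,h)$ adjacent to $(g',h')$ if and only if $g$ is adjacent to $g'$ in $G$ and $h$ is adjacent to $h'$ in $H$. $K_{n,n}$ denotes the complete bipartite graph with both parts of size $n$. For an integer $N\ge 1$ and a set $S$ of integers, the circulant graph $C_NS$ has vertex set $\{0,1,\dots,N-1\}$, with $i$ adjacent to $j$ if and only if $i-j \equiv \pm s \pmod N$ for some $s\in S$. A graph is circulant if it is isomorphic to some $C_NS$ (this includes disconnected graphs); equivalently, if it has an automorphism that permutes all its vertices in a single cycle. *)

theory Defs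
  imports Main "HOL-Number_Theory.Cong"
begin

text \<open>A graph (loops allowed, no multiple edges) is given by its vertex set together with
an adjacency relation; only the restriction of the relation to the vertex set matters.\<close>
type_synonym 'a graph = "'a set \<times> ('a \<Rightarrow> 'a \<Rightarrow> bool)"

definition verts :: "'a graph \<Rightarrow> 'a set" where "verts G = fst G"
definition adj :: "'a graph \<Rightarrow> 'a \<Rightarrow> 'a \<Rightarrow> bool" where "adj G = snd G"

definition graph_iso :: "'a graph \<Rightarrow> 'b graph \<Rightarrow> bool" where
  "graph_iso G H \<longleftrightarrow> (\<exists>f. bij_betw f (verts G) (verts H) \<and>
     (\<forall>x\<in>verts G. \<forall>y\<in>verts G. adj H (f x) (f y) \<longleftrightarrow> adj G x y))"

definition circ_graph :: "nat \<Rightarrow> int set \<Rightarrow> nat graph" where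
  "circ_graph N S = ({0..<N}, \<lambda>i j. \<exists>s\<in>S. [int i - int j = s] (mod int N) \<or> [int i - int j = - s] (mod int N))"

definition circulant :: "'a graph \<Rightarrow> bool" where
  "circulant G \<longleftrightarrow> (\<exists>N S. N \<ge> 1 \<and> graph_iso G (circ_graph N S))"

definition tensor :: "'a graph \<Rightarrow> 'b graph \<Rightarrow> ('a \<times> 'b) graph" where
  "tensor G H = (verts G \<times> verts H,
     \<lambda>(g, h) (g', h'). adj G g g' \<and> adj H h h')"

definition K_nn :: "nat \<Rightarrow> (bool \<times> nat) graph" where
  "K_nn n = (UNIV \<times> {0..<n}, \<lambda>(b, i) (c, j). b \<noteq> c)"

end

theory Submission
  imports Defs
begin

text \<open>Since N is odd, the Chinese remainder theorem identifies Z_2N with Z_2 x Z_N, so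
  a vertex z of C_2Nn is determined by its parity, its residue mod N and the block
  z div 2N. Sending z to ((odd z, z div 2N), z mod N) is therefore a bijection onto the
  vertices of K_n,n x C_N S. Two images are adjacent iff z - z' is odd and congruent
  to some \<plusminus>s mod N; this set of differences is closed under negation and under
  congruence mod 2Nn, so it is the connection set of a circulant graph on 2Nn vertices.\<close>

lemma graph_iso_sym:
  assumes "graph_iso G H"
  shows "graph_iso H G"
proof -
  obtain f where f: "bij_betw f (verts G) (verts H)"
    "\<forall>x\<in>verts G. \<forall>y\<in>verts G. adj H (f x) (f y) \<longleftrightarrow> adj G x y"
    using assms unfolding graph_iso_def by blast
  let ?g = "inv_into (verts G) f"
  have g: "bij_betw ?g (verts H) (verts G)"
    using f(1) by (rule bij_betw_inv_into)
  have "adj G (?g x) (?g y) \<longleftrightarrow> adj H x y" if "x \<in> verts H" "y \<in> verts H" for x y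
  proof -
    have "?g x \<in> verts G" "?g y \<in> verts G"
      using g that by (auto simp: bij_betw_apply)
    moreover have "f (?g x) = x" "f (?g y) = y"
      using f(1) that by (auto simp: bij_betw_def f_inv_into_f)
    ultimately show ?thesis using f(2) by metis
  qed
  with g show ?thesis unfolding graph_iso_def by blast
qed

lemma graph_iso_trans [trans]:
  assumes "graph_iso G H" and "graph_iso H K"
  shows "graph_iso G K"
proof -
  obtain f where f: "bij_betw f (verts G) (verts H)"
    "\<forall>x\<in>verts G. \<forall>y\<in>verts G. adj H (f x) (f y) \<longleftrightarrow> adj G x y"
    using assms(1) unfolding graph_iso_def by blast
  obtain g where g: "bij_betw g (verts H) (verts K)"
    "\<forall>x\<in>verts H. \<forall>y\<in>verts H. adj K (g x) (g y) \<longleftrightarrow> adj H x y"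
    using assms(2) unfolding graph_iso_def by blast
  have "adj K (g (f x)) (g (f y)) \<longleftrightarrow> adj G x y" if "x \<in> verts G" "y \<in> verts G" for x y
    using that f g by (simp add: bij_betw_apply)
  with bij_betw_trans[OF f(1) g(1)] show ?thesis
    unfolding graph_iso_def by (intro exI[of _ "g \<circ> f"]) simp
qed

lemma graph_iso_card_verts:
  assumes "graph_iso G H"
  shows "card (verts G) = card (verts H)"
  using assms unfolding graph_iso_def by (auto intro: bij_betw_same_card)

lemma verts_tensor [simp]: "verts (tensor G H) = verts G \<times> verts H"
  by (simp add: tensor_def verts_def)

lemma adj_tensor [simp]: "adj (tensor G H) (g, h) (g', h') \<longleftrightarrow> adj G g g' \<and> adj H h h'"
  by (simp add: tensor_def adj_def)

lemma verts_K_nn [simp]: "verts (K_nn n) = UNIV \<times> {0..<n}"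
  by (simp add: K_nn_def verts_def)

lemma adj_K_nn [simp]: "adj (K_nn n) (b, i) (c, j) \<longleftrightarrow> b \<noteq> c"
  by (simp add: K_nn_def adj_def)

lemma graph_iso_tensor_right:
  assumes "graph_iso G H"
  shows "graph_iso (tensor K G) (tensor K H)"
proof -
  obtain f where f: "bij_betw f (verts G) (verts H)"
    "\<forall>x\<in>verts G. \<forall>y\<in>verts G. adj H (f x) (f y) \<longleftrightarrow> adj G x y"
    using assms unfolding graph_iso_def by blast
  have "bij_betw (map_prod id f) (verts K \<times> verts G) (verts K \<times> verts H)"
    using bij_betw_id f(1) by (rule bij_betw_map_prod)
  moreover have "\<forall>x\<in>verts K \<times> verts G. \<forall>y\<in>verts K \<times> verts G.
      adj (tensor K H) (map_prod id f x) (map_prod id f y) \<longleftrightarrow> adj (tensor K G) x y"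
    using f(2) by auto
  ultimately show ?thesis unfolding graph_iso_def verts_tensor by blast
qed

lemma verts_circ_graph [simp]: "verts (circ_graph N S) = {0..<N}"
  by (simp add: circ_graph_def verts_def)

lemma adj_circ_graph:
  "adj (circ_graph N S) i j \<longleftrightarrow>
     (\<exists>s\<in>S. [int i - int j = s] (mod int N) \<or> [int i - int j = - s] (mod int N))"
  by (simp add: circ_graph_def adj_def)

lemma adj_circ_graph_closed:
  assumes cong_closed: "\<And>d d'. d \<in> T \<Longrightarrow> [d' = d] (mod int N) \<Longrightarrow> d' \<in> T"
    and uminus_closed: "\<And>d. d \<in> T \<Longrightarrow> - d \<in> T"
  shows "adj (circ_graph N T) i j \<longleftrightarrow> int i - int j \<in> T"
proof
  assume "adj (circ_graph N T) i j"
  then obtain s where "s \<in> T" and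
    "[int i - int j = s] (mod int N) \<or> [int i - int j = - s] (mod int N)"
    unfolding adj_circ_graph by blast
  then show "int i - int j \<in> T" using assms by (metis minus_minus)
next
  assume "int i - int j \<in> T"
  then show "adj (circ_graph N T) i j" unfolding adj_circ_graph by (blast intro: cong_refl)
qed

definition odd_lift :: "nat \<Rightarrow> int set \<Rightarrow> int set" where
  "odd_lift N S = {d. odd d \<and> (\<exists>s\<in>S. [d = s] (mod int N) \<or> [d = - s] (mod int N))}"

lemma odd_lift_cong_closed:
  assumes "d \<in> odd_lift N S" and "[d' = d] (mod int M)" and "2 * int N dvd int M"
  shows "d' \<in> odd_lift N S"
proof -
  have "[d' = d] (mod 2)" and "[d' = d] (mod int N)"
    using assms(2,3) by (auto intro: cong_dvd_modulus dvd_mult_left dvd_mult_right)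
  moreover have "odd d" and "\<exists>s\<in>S. [d = s] (mod int N) \<or> [d = - s] (mod int N)"
    using assms(1) by (auto simp: odd_lift_def)
  ultimately show ?thesis
    unfolding odd_lift_def by (auto simp: cong_def odd_iff_mod_2_eq_one intro: cong_trans)
qed

lemma odd_lift_uminus_closed:
  assumes "d \<in> odd_lift N S"
  shows "- d \<in> odd_lift N S"
proof -
  obtain s where "odd d" "s \<in> S" "[d = s] (mod int N) \<or> [d = - s] (mod int N)"
    using assms by (auto simp: odd_lift_def)
  then have "odd (- d)" "[- d = - s] (mod int N) \<or> [- d = s] (mod int N)"
    using cong_minus_minus_iff[of d s] cong_minus_minus_iff[of d "- s"] by auto
  with \<open>s \<in> S\<close> show ?thesis unfolding odd_lift_def by blast
qed

definition tensor_coords :: "nat \<Rightarrow> nat \<Rightarrow> (bool \<times> nat) \<times> nat" where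
  "tensor_coords N z = ((odd z, z div (2 * N)), z mod N)"

lemma inj_tensor_coords:
  assumes "odd N"
  shows "inj (tensor_coords N)"
proof (rule injI)
  fix z z' assume "tensor_coords N z = tensor_coords N z'"
  then have parity: "odd z = odd z'" and block: "z div (2 * N) = z' div (2 * N)"
    and "[z = z'] (mod N)"
    by (simp_all add: tensor_coords_def cong_def)
  moreover have "[z = z'] (mod 2)"
    using parity by (simp add: cong_def odd_iff_mod_2_eq_one) presburger
  moreover have "coprime 2 N" using assms by simp
  ultimately have "[z = z'] (mod 2 * N)"
    by (metis coprime_cong_mult_nat)
  with block show "z = z'" by (metis cong_def div_mult_mod_eq)
qed

lemma bij_betw_tensor_coords:
  assumes "odd N"
  shows "bij_betw (tensor_coords N) {0..<2 * N * n} (verts (tensor (K_nn n) (circ_graph N S)))"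
proof -
  let ?V = "verts (tensor (K_nn n) (circ_graph N S))"
  have "N > 0" using assms by (rule odd_pos)
  have inj: "inj_on (tensor_coords N) {0..<2 * N * n}"
    using inj_tensor_coords[OF assms] by (rule inj_on_subset) simp
  have "tensor_coords N ` {0..<2 * N * n} \<subseteq> ?V"
  proof (rule image_subsetI)
    fix z assume "z \<in> {0..<2 * N * n}"
    then have "z div (2 * N) < n"
      using \<open>N > 0\<close> by (simp add: div_less_iff_less_mult mult.commute mult.left_commute)
    then show "tensor_coords N z \<in> ?V" using \<open>N > 0\<close> by (simp add: tensor_coords_def)
  qed
  moreover have "card ?V = 2 * N * n"
    by (simp add: card_cartesian_product)
  ultimately have "tensor_coords N ` {0..<2 * N * n} = ?V"
    using inj by (intro card_subset_eq) (simp_all add: card_image)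
  with inj show ?thesis by (simp add: bij_betw_def)
qed

lemma adj_tensor_coords:
  "adj (tensor (K_nn n) (circ_graph N S)) (tensor_coords N z) (tensor_coords N z')
     \<longleftrightarrow> int z - int z' \<in> odd_lift N S"
proof -
  have "[int (z mod N) - int (z' mod N) = t] (mod int N) \<longleftrightarrow> [int z - int z' = t] (mod int N)"
    for t
    by (simp add: cong_def zmod_int mod_diff_eq)
  moreover have "odd z \<noteq> odd z' \<longleftrightarrow> odd (int z - int z')"
    by auto
  ultimately show ?thesis
    by (simp add: tensor_coords_def adj_circ_graph odd_lift_def)
qed

lemma graph_iso_circ_graph_tensor_K_nn:
  assumes "odd N"
  shows "graph_iso (circ_graph (2 * N * n) (odd_lift N S)) (tensor (K_nn n) (circ_graph N S))"
proof -
  have "adj (circ_graph (2 * N * n) (odd_lift N S)) z z' \<longleftrightarrow> int z - int z' \<in> odd_lift N S"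
    for z z'
  proof (rule adj_circ_graph_closed)
    show "d' \<in> odd_lift N S" if "d \<in> odd_lift N S" "[d' = d] (mod int (2 * N * n))" for d d'
      using that by (rule odd_lift_cong_closed) simp
  qed (rule odd_lift_uminus_closed)
  then show ?thesis
    using bij_betw_tensor_coords[OF assms]
    unfolding graph_iso_def by (intro exI[of _ "tensor_coords N"]) (simp add: adj_tensor_coords)
qed

theorem theorem8:
  fixes G :: "'a graph" and n :: nat
  assumes "circulant G"
    and "odd (card (verts G))"
    and "n \<ge> 1"
  shows "circulant (tensor (K_nn n) G)"
proof -
  obtain N S where "N \<ge> 1" and G_iso: "graph_iso G (circ_graph N S)"
    using assms(1) unfolding circulant_def by blast
  have "odd N"
    using assms(2) graph_iso_card_verts[OF G_iso] by simp
  have "graph_iso (tensor (K_nn n) G) (tensor (K_nn n) (circ_graph N S))"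
    using G_iso by (rule graph_iso_tensor_right)
  also have "graph_iso \<dots> (circ_graph (2 * N * n) (odd_lift N S))"
    using graph_iso_circ_graph_tensor_K_nn[OF \<open>odd N\<close>] by (rule graph_iso_sym)
  finally have "graph_iso (tensor (K_nn n) G) (circ_graph (2 * N * n) (odd_lift N S))" .
  moreover have "2 * N * n \<ge> 1"
    using \<open>N \<ge> 1\<close> assms(3) by simp
  ultimately show ?thesis unfolding circulant_def by blast
qed

end
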